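(* Consider a forward complete system $\dot x(t)=f(x_t,u(t))$ with delay-free output $y(t)=h_0(x(t))$ as in the context. Let $\alpha:\mathcal X^n\to\mathbb R_{\ge0}$ be continuous with $\alpha(0)=0$. Assume there exist $\beta\in\mathcal{KL}$ and $\rho,\kappa,\gamma\in\mathcal N$ such that for all $\xi\in\mathcal X^n$, $u\in\mathcal M$ and all $t\ge0$, $|y(t)|\le\max\{\beta(\alpha(\xi),\ t/(1+\rho(\|\xi\|_{\mathcal X}))),\ \kappa(\max_{\tau\in[-\theta,t]}|y(\tau)|),\ \gamma(\|u\|)\}$. Then there exists $\beta_1\in\mathcal{KL}$ such that for all $\xi,u$ and all $t\ge0$, $\|y_t\|_{\mathcal X}\le\max\{\beta_1(\tilde\alpha(\xi),\ t/(1+\rho(\|\xi\|_{\mathcal X}))),\ \kappa(\max_{\tau\in[0,t]}\|y_\tau\|_{\mathcal X}),\ \gamma(\|u\|)\}$, where $\tilde\alpha(\xi)=\max\{\alpha(\xi),H(\xi)\}$.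
   Context: Fix $\theta>0$; $\mathcal X^k=C([-\theta,0],\mathbb R^k)$ with norm $\|\xi\|_{\mathcal X}=\max_{s\in[-\theta,0]}|\xi(s)|$; for a continuous $v$ on $[-\theta,b]$, $v_t(s)=v(t+s)$. $\mathcal M$: measurable locally essentially bounded $u:\mathbb R_{\ge0}\to\mathbb R^m$, $\|u\|$ the essential supremum on $[0,\infty)$. Classes: $\mathcal N$ = continuous nondecreasing $\sigma:\mathbb R_{\ge0}\to\mathbb R_{\ge0}$, $\sigma(0)=0$; $\mathcal K$ = strictly increasing ones; $\mathcal{KL}$ = $\beta(s,t)$ of class $\mathcal K$ in $s$ and decreasing to $0$ as $t\to\infty$. $f:\mathcal X^n\times\mathbb R^m\to\mathbb R^n$ is locally Lipschitz and maps bounded sets to bounded sets; $x(\cdot,\xi,u)$ is the unique maximal solution with $x(s)=\xi(s)$ on $[-\theta,0]$; forward complete means these exist for all $t\ge0$. $h_0:\mathbb R^n\to\mathbb R^p$ is continuous with $h_0(0)=0$, and along a solution $y(\tau)=h_0(x(\tau,\xi,u))$ for $\tau\ge-\theta$ (so $y(\tau)=h_0(\xi(\tau))$ on $[-\theta,0]$); $y_t\in\mathcal X^p$ is $y_t(s)=y(t+s)$. $H(\xi)=\max_{s\in[-\theta,0]}|h_0(\xi(s))|=\|y_0\|_{\mathcal X}$. *)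

theory Defs
  imports "HOL-Analysis.Analysis" "HOL-Probability.Essential_Supremum"
begin

text \<open>Elements of C([-theta,0], R^k) are represented canonically as functions
  real => 'a that are continuous on [-theta,0] and vanish outside [-theta,0].\<close>
definition Xsp :: "real \<Rightarrow> (real \<Rightarrow> 'a::euclidean_space) set" where
  "Xsp \<theta> = {\<xi>. continuous_on {-\<theta>..0} \<xi> \<and> (\<forall>s. s \<notin> {-\<theta>..0} \<longrightarrow> \<xi> s = 0)}"

definition xnorm :: "real \<Rightarrow> (real \<Rightarrow> 'a::euclidean_space) \<Rightarrow> real" where
  "xnorm \<theta> \<xi> = Sup ((\<lambda>s. norm (\<xi> s)) ` {-\<theta>..0})"

definition seg :: "real \<Rightarrow> (real \<Rightarrow> 'a::euclidean_space) \<Rightarrow> real \<Rightarrow> (real \<Rightarrow> 'a)" where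
  "seg \<theta> v t = (\<lambda>s. if s \<in> {-\<theta>..0} then v (t + s) else 0)"

definition Mset :: "(real \<Rightarrow> 'b::euclidean_space) set" where
  "Mset = {u. set_borel_measurable lborel {0..} u \<and>
       (\<forall>T\<ge>0. \<exists>C. AE t in lborel. t \<in> {0..T} \<longrightarrow> norm (u t) \<le> C)}"

definition ess_norm :: "(real \<Rightarrow> 'b::euclidean_space) \<Rightarrow> ereal" where
  "ess_norm u = esssup (restrict_space lborel {0..}) (\<lambda>t. ereal (norm (u t)))"

definition classN :: "(real \<Rightarrow> real) \<Rightarrow> bool" where
  "classN \<sigma> \<longleftrightarrow> continuous_on {0..} \<sigma> \<and> mono_on {0..} \<sigma> \<and> \<sigma> 0 = 0 \<and> (\<forall>s\<ge>0. \<sigma> s \<ge> 0)"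

definition classK :: "(real \<Rightarrow> real) \<Rightarrow> bool" where
  "classK \<sigma> \<longleftrightarrow> classN \<sigma> \<and> strict_mono_on {0..} \<sigma>"

definition classKL :: "(real \<Rightarrow> real \<Rightarrow> real) \<Rightarrow> bool" where
  "classKL \<beta> \<longleftrightarrow> (\<forall>t\<ge>0. classK (\<lambda>s. \<beta> s t)) \<and>
     (\<forall>s\<ge>0. antimono_on {0..} (\<lambda>t. \<beta> s t) \<and> ((\<lambda>t. \<beta> s t) \<longlongrightarrow> 0) at_top)"

definition loc_lipschitz_X :: "real \<Rightarrow> ((real \<Rightarrow> 'a::euclidean_space) \<Rightarrow> 'b::euclidean_space \<Rightarrow> 'a) \<Rightarrow> bool" where
  "loc_lipschitz_X \<theta> f \<longleftrightarrow> (\<forall>\<xi>\<in>Xsp \<theta>. \<forall>v. \<exists>r>0. \<exists>L. \<forall>\<xi>1\<in>Xsp \<theta>. \<forall>\<xi>2\<in>Xsp \<theta>. \<forall>v1 v2.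
      xnorm \<theta> (\<xi>1 - \<xi>) \<le> r \<and> xnorm \<theta> (\<xi>2 - \<xi>) \<le> r \<and> norm (v1 - v) \<le> r \<and> norm (v2 - v) \<le> r \<longrightarrow>
      norm (f \<xi>1 v1 - f \<xi>2 v2) \<le> L * (xnorm \<theta> (\<xi>1 - \<xi>2) + norm (v1 - v2)))"

definition bounded_on_bounded_X :: "real \<Rightarrow> ((real \<Rightarrow> 'a::euclidean_space) \<Rightarrow> 'b::euclidean_space \<Rightarrow> 'a) \<Rightarrow> bool" where
  "bounded_on_bounded_X \<theta> f \<longleftrightarrow> (\<forall>R. \<exists>C. \<forall>\<xi>\<in>Xsp \<theta>. \<forall>v. xnorm \<theta> \<xi> \<le> R \<and> norm v \<le> R \<longrightarrow> norm (f \<xi> v) \<le> C)"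

definition is_solution :: "real \<Rightarrow> ((real \<Rightarrow> 'a::euclidean_space) \<Rightarrow> 'b::euclidean_space \<Rightarrow> 'a) \<Rightarrow>
    (real \<Rightarrow> 'a) \<Rightarrow> (real \<Rightarrow> 'b) \<Rightarrow> (real \<Rightarrow> 'a) \<Rightarrow> bool" where
  "is_solution \<theta> f \<xi> u z \<longleftrightarrow> (\<forall>s\<in>{-\<theta>..0}. z s = \<xi> s) \<and> continuous_on {-\<theta>..} z \<and>
     (\<forall>t\<ge>0. ((\<lambda>\<tau>. f (seg \<theta> z \<tau>) (u \<tau>)) has_integral (z t - \<xi> 0)) {0..t})"

definition continuous_X :: "real \<Rightarrow> ((real \<Rightarrow> 'a::euclidean_space) \<Rightarrow> real) \<Rightarrow> bool" where
  "continuous_X \<theta> \<alpha> \<longleftrightarrow> (\<forall>\<xi>\<in>Xsp \<theta>. \<forall>\<epsilon>>0. \<exists>\<delta>>0. \<forall>\<eta>\<in>Xsp \<theta>.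
       xnorm \<theta> (\<eta> - \<xi>) < \<delta> \<longrightarrow> \<bar>\<alpha> \<eta> - \<alpha> \<xi>\<bar> < \<epsilon>)"

end

theory Submission
  imports Defs "HOL-Real_Asymp.Real_Asymp"
begin

text \<open>The window [t - \<theta>, t] of y_t either lies in [0, \<infinity>), where the hypothesis applies at
  rescaled times (t + s)/(1 + \<rho>) \<ge> t/(1 + \<rho>) - \<theta>, which the shift \<beta>(r, max 0 (\<tau> - \<theta>)) accounts
  for; or it reaches back into the initial segment, where |y| \<le> H(\<xi>) and t < \<theta>, and this is
  absorbed by the decaying term 2\<theta> r/(\<theta> + \<tau>), which is at least r for \<tau> < \<theta>.\<close>

lemma classK_add:
  assumes "classK \<sigma>" "classK \<tau>"
  shows "classK (\<lambda>s. \<sigma> s + \<tau> s)"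
  using assms unfolding classK_def classN_def
  by (auto intro!: continuous_on_add simp: monotone_on_def add_mono add_strict_mono)

lemma classKL_add:
  assumes "classKL \<beta>1" "classKL \<beta>2"
  shows "classKL (\<lambda>r t. \<beta>1 r t + \<beta>2 r t)"
  using assms unfolding classKL_def
  by (auto intro!: classK_add tendsto_add_zero simp: monotone_on_def add_mono)

lemma classKL_shift:
  assumes "classKL \<beta>"
  shows "classKL (\<lambda>r t. \<beta> r (max 0 (t - \<theta>)))"
  unfolding classKL_def
proof (intro conjI allI impI)
  fix s :: real assume "s \<ge> 0"
  then have anti: "antimono_on {0..} (\<lambda>t. \<beta> s t)" and lim: "((\<lambda>t. \<beta> s t) \<longlongrightarrow> 0) at_top"
    using assms unfolding classKL_def by auto
  show "antimono_on {0..} (\<lambda>t. \<beta> s (max 0 (t - \<theta>)))"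
    using anti by (auto simp: monotone_on_def)
  have "filterlim (\<lambda>t::real. max 0 (t - \<theta>)) at_top at_top"
    by real_asymp
  then show "((\<lambda>t. \<beta> s (max 0 (t - \<theta>))) \<longlongrightarrow> 0) at_top"
    using filterlim_compose[OF lim] by blast
qed (use assms in \<open>simp add: classKL_def\<close>)

lemma classKL_hyperbolic:
  fixes c \<theta> :: real
  assumes "c > 0" "\<theta> > 0"
  shows "classKL (\<lambda>r t. c * r / (\<theta> + t))"
  unfolding classKL_def classK_def classN_def
proof (intro conjI allI impI)
  fix t :: real assume "t \<ge> 0"
  with assms have pos: "\<theta> + t > 0" by simp
  then show "continuous_on {0..} (\<lambda>r. c * r / (\<theta> + t))"
    by (intro continuous_intros) auto
  show "strict_mono_on {0..} (\<lambda>r. c * r / (\<theta> + t))"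
    using pos assms by (auto simp: strict_mono_on_def intro!: divide_strict_right_mono)
  then show "mono_on {0..} (\<lambda>r. c * r / (\<theta> + t))"
    by (rule strict_mono_on_imp_mono_on)
  show "0 \<le> c * r / (\<theta> + t)" if "0 \<le> r" for r
    using pos assms that by simp
next
  fix r :: real assume "r \<ge> 0"
  then have "0 \<le> c * r"
    using assms by simp
  then show "antimono_on {0..} (\<lambda>t. c * r / (\<theta> + t))"
    using assms by (auto simp: monotone_on_def intro!: divide_left_mono)
  show "((\<lambda>t. c * r / (\<theta> + t)) \<longlongrightarrow> 0) at_top"
    by real_asymp
qed simp

definition shifted_KL :: "real \<Rightarrow> (real \<Rightarrow> real \<Rightarrow> real) \<Rightarrow> real \<Rightarrow> real \<Rightarrow> real" where
  "shifted_KL \<theta> \<beta> r t = \<beta> r (max 0 (t - \<theta>)) + 2 * \<theta> * r / (\<theta> + t)"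

lemma classKL_shifted_KL:
  assumes "\<theta> > 0" "classKL \<beta>"
  shows "classKL (shifted_KL \<theta> \<beta>)"
  unfolding shifted_KL_def[abs_def]
  using assms by (intro classKL_add classKL_shift classKL_hyperbolic) auto

lemma bdd_above_norm_image:
  assumes "continuous_on S g" "compact S"
  shows "bdd_above ((\<lambda>s. norm (g s)) ` S)"
  using assms by (intro bounded_imp_bdd_above compact_imp_bounded
      compact_continuous_image continuous_on_norm)

lemma Sup_norm_image_nonneg:
  fixes g :: "real \<Rightarrow> 'a::real_normed_vector"
  assumes "continuous_on {a..b} g" "a \<le> b"
  shows "0 \<le> Sup ((\<lambda>s. norm (g s)) ` {a..b})"
proof -
  have "norm (g b) \<le> Sup ((\<lambda>s. norm (g s)) ` {a..b})"
    using assms bdd_above_norm_image[OF assms(1)] by (intro cSup_upper) auto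
  then show ?thesis
    by (rule order_trans[OF norm_ge_zero])
qed

lemma norm_le_xnorm:
  assumes "continuous_on {-\<theta>..0} \<xi>" "s \<in> {-\<theta>..0}"
  shows "norm (\<xi> s) \<le> xnorm \<theta> \<xi>"
  unfolding xnorm_def using assms bdd_above_norm_image[OF assms(1)] by (intro cSup_upper) auto

lemma xnorm_seg_eq: "xnorm \<theta> (seg \<theta> y \<tau>) = Sup ((\<lambda>s. norm (y (\<tau> + s))) ` {-\<theta>..0})"
  unfolding xnorm_def seg_def by (intro arg_cong[where f = Sup] image_cong) auto

lemma xnorm_seg_le:
  assumes "\<theta> \<ge> 0" "\<And>s. s \<in> {-\<theta>..0} \<Longrightarrow> norm (y (\<tau> + s)) \<le> B"
  shows "xnorm \<theta> (seg \<theta> y \<tau>) \<le> B"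
  unfolding xnorm_seg_eq using assms by (intro cSup_least) auto

lemma norm_le_xnorm_seg:
  assumes "continuous_on {-\<theta>..} y" "\<tau> \<ge> 0" "s \<in> {-\<theta>..0}"
  shows "norm (y (\<tau> + s)) \<le> xnorm \<theta> (seg \<theta> y \<tau>)"
proof -
  have "continuous_on {-\<theta>..0} (\<lambda>s. y (\<tau> + s))"
    using assms(2) by (intro continuous_on_compose2[OF assms(1)] continuous_intros) auto
  then have "continuous_on {-\<theta>..0} (seg \<theta> y \<tau>)"
    by (rule continuous_on_cong[THEN iffD1, rotated 2]) (auto simp: seg_def)
  from norm_le_xnorm[OF this assms(3)] show ?thesis
    using assms(3) by (simp add: seg_def)
qed

lemma Sup_norm_le_Sup_xnorm_seg:
  assumes "\<theta> \<ge> 0" "continuous_on {-\<theta>..} y" "0 \<le> t'" "t' \<le> t"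
  shows "Sup ((\<lambda>\<sigma>. norm (y \<sigma>)) ` {-\<theta>..t'}) \<le> Sup ((\<lambda>\<tau>. xnorm \<theta> (seg \<theta> y \<tau>)) ` {0..t})"
    (is "_ \<le> ?K")
proof (rule cSup_least)
  have "bdd_above ((\<lambda>\<sigma>. norm (y \<sigma>)) ` {-\<theta>..t})"
    using assms(2) by (intro bdd_above_norm_image) (auto elim: continuous_on_subset)
  then obtain B where B: "\<And>\<sigma>. \<sigma> \<in> {-\<theta>..t} \<Longrightarrow> norm (y \<sigma>) \<le> B"
    by (fastforce simp: bdd_above_def)
  have "bdd_above ((\<lambda>\<tau>. xnorm \<theta> (seg \<theta> y \<tau>)) ` {0..t})"
    using assms(1) by (intro bdd_aboveI2[of _ _ B] xnorm_seg_le B) auto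
  then have le_K: "xnorm \<theta> (seg \<theta> y \<tau>) \<le> ?K" if "\<tau> \<in> {0..t}" for \<tau>
    using that by (intro cSup_upper) auto
  fix v assume "v \<in> (\<lambda>\<sigma>. norm (y \<sigma>)) ` {-\<theta>..t'}"
  then obtain \<sigma> where \<sigma>: "\<sigma> \<in> {-\<theta>..t'}" and v: "v = norm (y \<sigma>)" by auto
  show "v \<le> ?K"
  proof (cases "\<sigma> \<le> 0")
    case True
    then have "norm (y (0 + \<sigma>)) \<le> xnorm \<theta> (seg \<theta> y 0)"
      using \<sigma> by (intro norm_le_xnorm_seg[OF assms(2)]) auto
    with le_K[of 0] assms v show ?thesis by simp
  next
    case False
    then have "norm (y (\<sigma> + 0)) \<le> xnorm \<theta> (seg \<theta> y \<sigma>)"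
      using assms(1) by (intro norm_le_xnorm_seg[OF assms(2)]) auto
    with le_K[of \<sigma>] \<sigma> assms v False show ?thesis by simp
  qed
qed (use assms in auto)

lemma rescaled_time_ge_shift:
  fixes t s r \<theta> :: real
  assumes "0 \<le> t + s" "-\<theta> \<le> s" "\<theta> \<ge> 0" "r \<ge> 1"
  shows "max 0 (t / r - \<theta>) \<le> (t + s) / r"
proof -
  have "\<theta> \<le> \<theta> * r"
    using mult_left_mono[OF assms(4,3)] by simp
  then have "-\<theta> \<le> s / r"
    using assms by (simp add: le_divide_eq)
  moreover have "0 \<le> (t + s) / r"
    using assms by simp
  ultimately show ?thesis
    by (simp add: add_divide_distrib)
qed

lemma arg_le_shifted_KL:
  assumes "\<theta> > 0" "classKL \<beta>" "0 \<le> r" "0 \<le> \<tau>" "\<tau> < \<theta>"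
  shows "r \<le> shifted_KL \<theta> \<beta> r \<tau>"
proof -
  have "1 \<le> 2 * \<theta> / (\<theta> + \<tau>)"
    using assms by (simp add: field_simps)
  from mult_left_mono[OF this assms(3)] have "r \<le> 2 * \<theta> * r / (\<theta> + \<tau>)"
    by (simp add: ac_simps)
  moreover have "0 \<le> \<beta> r (max 0 (\<tau> - \<theta>))"
    using assms(2,3) unfolding classKL_def classK_def classN_def by simp
  ultimately show ?thesis
    by (simp add: shifted_KL_def)
qed

lemma KL_le_shifted_KL:
  assumes "\<theta> > 0" "classKL \<beta>" "0 \<le> a" "a \<le> r" "0 \<le> \<tau>" "max 0 (\<tau> - \<theta>) \<le> \<tau>'"
  shows "\<beta> a \<tau>' \<le> shifted_KL \<theta> \<beta> r \<tau>"
proof -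
  have anti: "antimono_on {0..} (\<beta> a)" and mono: "mono_on {0..} (\<lambda>s. \<beta> s (max 0 (\<tau> - \<theta>)))"
    using assms(2,3) unfolding classKL_def classK_def classN_def by auto
  have "\<beta> a \<tau>' \<le> \<beta> a (max 0 (\<tau> - \<theta>))"
    using assms(6) by (intro monotone_onD[OF anti]) auto
  moreover have "\<beta> a (max 0 (\<tau> - \<theta>)) \<le> \<beta> r (max 0 (\<tau> - \<theta>))"
    using assms(3,4) by (intro monotone_onD[OF mono]) auto
  moreover have "0 \<le> 2 * \<theta> * r / (\<theta> + \<tau>)"
    using assms by simp
  ultimately show ?thesis
    by (simp add: shifted_KL_def)
qed

lemma xnorm_seg_bound:
  fixes y :: "real \<Rightarrow> 'a::euclidean_space"
  assumes \<theta>: "\<theta> > 0" and y: "continuous_on {-\<theta>..} y"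
    and \<beta>: "classKL \<beta>" and \<kappa>: "classN \<kappa>"
    and a: "a \<ge> 0" and r: "r \<ge> 1" and t: "t \<ge> 0"
    and init: "\<And>s. s \<in> {-\<theta>..0} \<Longrightarrow> norm (y s) \<le> H"
    and est: "\<And>\<tau>. 0 \<le> \<tau> \<Longrightarrow> \<tau> \<le> t \<Longrightarrow>
      norm (y \<tau>) \<le> max (\<beta> a (\<tau> / r)) (max (\<kappa> (Sup ((\<lambda>\<sigma>. norm (y \<sigma>)) ` {-\<theta>..\<tau>}))) G)"
  shows "xnorm \<theta> (seg \<theta> y t) \<le>
    max (shifted_KL \<theta> \<beta> (max a H) (t / r))
      (max (\<kappa> (Sup ((\<lambda>\<tau>. xnorm \<theta> (seg \<theta> y \<tau>)) ` {0..t}))) G)"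
proof (rule xnorm_seg_le)
  define K where "K = Sup ((\<lambda>\<tau>. xnorm \<theta> (seg \<theta> y \<tau>)) ` {0..t})"
  have T: "0 \<le> t / r" "t / r \<le> t"
    using r t by (auto simp: divide_le_eq mult_le_cancel_left1)
  fix s assume s: "s \<in> {-\<theta>..0}"
  show "norm (y (t + s)) \<le> max (shifted_KL \<theta> \<beta> (max a H) (t / r)) (max (\<kappa> K) G)"
  proof (cases "t + s < 0")
    case True
    then have "norm (y (t + s)) \<le> max a H"
      using init[of "t + s"] s t by auto
    also have "\<dots> \<le> shifted_KL \<theta> \<beta> (max a H) (t / r)"
      using True s T a by (intro arg_le_shifted_KL[OF \<theta> \<beta>]) auto
    finally show ?thesis by simp
  next
    case False
    have "max 0 (t / r - \<theta>) \<le> (t + s) / r"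
      using False s \<theta> r by (intro rescaled_time_ge_shift) auto
    then have \<beta>_le: "\<beta> a ((t + s) / r) \<le> shifted_KL \<theta> \<beta> (max a H) (t / r)"
      using a T by (intro KL_le_shifted_KL[OF \<theta> \<beta>]) auto
    have "0 \<le> Sup ((\<lambda>\<sigma>. norm (y \<sigma>)) ` {-\<theta>..t + s})"
      using False \<theta> by (intro Sup_norm_image_nonneg continuous_on_subset[OF y]) auto
    moreover have "Sup ((\<lambda>\<sigma>. norm (y \<sigma>)) ` {-\<theta>..t + s}) \<le> K"
      unfolding K_def using False s \<theta> by (intro Sup_norm_le_Sup_xnorm_seg[OF _ y]) auto
    ultimately have \<kappa>_le: "\<kappa> (Sup ((\<lambda>\<sigma>. norm (y \<sigma>)) ` {-\<theta>..t + s})) \<le> \<kappa> K"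
      using \<kappa> unfolding classN_def mono_on_def by auto
    have "norm (y (t + s)) \<le> max (\<beta> a ((t + s) / r))
        (max (\<kappa> (Sup ((\<lambda>\<sigma>. norm (y \<sigma>)) ` {-\<theta>..t + s}))) G)"
      using est False s by simp
    with \<beta>_le \<kappa>_le show ?thesis
      by linarith
  qed
qed (use \<theta> in simp)

theorem lemma7p1:
  fixes \<theta> :: real
    and f :: "(real \<Rightarrow> 'a::euclidean_space) \<Rightarrow> 'b::euclidean_space \<Rightarrow> 'a"
    and h0 :: "'a \<Rightarrow> 'c::euclidean_space"
    and x :: "(real \<Rightarrow> 'a) \<Rightarrow> (real \<Rightarrow> 'b) \<Rightarrow> real \<Rightarrow> 'a"
    and \<alpha> :: "(real \<Rightarrow> 'a) \<Rightarrow> real"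
    and \<beta> :: "real \<Rightarrow> real \<Rightarrow> real"
    and \<rho> \<kappa> \<gamma> :: "real \<Rightarrow> real"
  assumes theta_pos: "\<theta> > 0"
    and f_lip: "loc_lipschitz_X \<theta> f"
    and f_bdd: "bounded_on_bounded_X \<theta> f"
    and h0_cont: "continuous_on UNIV h0" and h0_zero: "h0 0 = 0"
    and sol: "\<And>\<xi> u. \<xi> \<in> Xsp \<theta> \<Longrightarrow> u \<in> Mset \<Longrightarrow> is_solution \<theta> f \<xi> u (x \<xi> u)"
    and alpha_cont: "continuous_X \<theta> \<alpha>"
    and alpha_nonneg: "\<And>\<xi>. \<xi> \<in> Xsp \<theta> \<Longrightarrow> \<alpha> \<xi> \<ge> 0"
    and alpha_zero: "\<alpha> (\<lambda>s. 0) = 0"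
    and beta: "classKL \<beta>"
    and rho: "classN \<rho>" and kappa: "classN \<kappa>" and gamma: "classN \<gamma>"
    and est: "\<And>\<xi> u t. \<xi> \<in> Xsp \<theta> \<Longrightarrow> u \<in> Mset \<Longrightarrow> ess_norm u < \<infinity> \<Longrightarrow> t \<ge> 0 \<Longrightarrow>
        norm (h0 (x \<xi> u t)) \<le>
          max (\<beta> (\<alpha> \<xi>) (t / (1 + \<rho> (xnorm \<theta> \<xi>))))
            (max (\<kappa> (Sup ((\<lambda>\<tau>. norm (h0 (x \<xi> u \<tau>))) ` {-\<theta>..t})))
                 (\<gamma> (real_of_ereal (ess_norm u))))"
  shows "\<exists>\<beta>1. classKL \<beta>1 \<and>
    (\<forall>\<xi>\<in>Xsp \<theta>. \<forall>u\<in>Mset. ess_norm u < \<infinity> \<longrightarrow> (\<forall>t\<ge>0.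
        xnorm \<theta> (seg \<theta> (\<lambda>\<tau>. h0 (x \<xi> u \<tau>)) t) \<le>
          max (\<beta>1 (max (\<alpha> \<xi>) (xnorm \<theta> (\<lambda>s. h0 (\<xi> s)))) (t / (1 + \<rho> (xnorm \<theta> \<xi>))))
            (max (\<kappa> (Sup ((\<lambda>\<tau>. xnorm \<theta> (seg \<theta> (\<lambda>r. h0 (x \<xi> u r)) \<tau>)) ` {0..t})))
                 (\<gamma> (real_of_ereal (ess_norm u))))))"
proof (intro exI[of _ "shifted_KL \<theta> \<beta>"] conjI classKL_shifted_KL[OF theta_pos beta] ballI allI impI)
  fix \<xi> :: "real \<Rightarrow> 'a" and u :: "real \<Rightarrow> 'b" and t :: real
  assume \<xi>: "\<xi> \<in> Xsp \<theta>" and u: "u \<in> Mset" "ess_norm u < \<infinity>" and t: "t \<ge> 0"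
  have x: "continuous_on {-\<theta>..} (x \<xi> u)" "\<And>s. s \<in> {-\<theta>..0} \<Longrightarrow> x \<xi> u s = \<xi> s"
    using sol[OF \<xi> u(1)] unfolding is_solution_def by auto
  have \<xi>_cont: "continuous_on {-\<theta>..0} \<xi>"
    using \<xi> unfolding Xsp_def by blast
  have "0 \<le> xnorm \<theta> \<xi>"
    unfolding xnorm_def using \<xi>_cont theta_pos by (intro Sup_norm_image_nonneg) auto
  then have "1 \<le> 1 + \<rho> (xnorm \<theta> \<xi>)"
    using rho unfolding classN_def by auto
  moreover have "norm (h0 (x \<xi> u s)) \<le> xnorm \<theta> (\<lambda>s. h0 (\<xi> s))" if "s \<in> {-\<theta>..0}" for s
    using that x(2) by (auto intro!: norm_le_xnorm continuous_on_compose2[OF h0_cont \<xi>_cont])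
  ultimately show "xnorm \<theta> (seg \<theta> (\<lambda>\<tau>. h0 (x \<xi> u \<tau>)) t) \<le>
      max (shifted_KL \<theta> \<beta> (max (\<alpha> \<xi>) (xnorm \<theta> (\<lambda>s. h0 (\<xi> s)))) (t / (1 + \<rho> (xnorm \<theta> \<xi>))))
        (max (\<kappa> (Sup ((\<lambda>\<tau>. xnorm \<theta> (seg \<theta> (\<lambda>r. h0 (x \<xi> u r)) \<tau>)) ` {0..t})))
             (\<gamma> (real_of_ereal (ess_norm u))))"
    using theta_pos beta kappa alpha_nonneg[OF \<xi>] t est[OF \<xi> u]
    by (intro xnorm_seg_bound continuous_on_compose2[OF h0_cont x(1)]) auto
qed

end
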